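(* In the construction below, $\hat{\mathcal D}$ is $1$-expanding with respect to $(X,d)$: for any two directed paths $\gamma_1,\gamma_2$ in $\mathcal D$ from the root to vertices $(x_1,K),(x_2,K)$ respectively, $\mathrm{dist}_{\hat{\mathcal D}}(\gamma_1,\gamma_2)\ge d(x_1,x_2)$.
   Context: Construction. Let $(X,d)$ be a metric space with $n=|X|\ge2$ and $\mathrm{diam}(X)=1$. For $S\subseteq X$, $r\ge0$: $B_X(S,r):=\{x\in X:\exists s\in S,\ d(x,s)\le r\}$ and $B_X(x,r):=B_X(\{x\},r)$. Let $\varepsilon_0:=\min\{d(x,y):x\ne y\}$, $\tau:=12$, $K:=1+\lceil\log_\tau(1/\varepsilon_0)\rceil$. For $\eta>0$ the greedy $\eta$-net is built as: $N_0=\emptyset$; for $j\ge1$, $S_j:=X\setminus B_X(N_{j-1},\eta)$; if $S_j=\emptyset$ output $N_{j-1}$; else pick $x_j\in S_j$ maximizing $|B_X(x,\eta/3)|$ and set $N_j=N_{j-1}\cup\{x_j\}$. For $k=0,\dots,K$ let $U_k$ be the greedy $\tau^{-k}$-net. For $k<K$, $A_k$ is the set of pairs $(u,u')\in U_k\times U_{k+1}$ with (i) $d(u,u')\le4\tau^{-k}$ and (ii) $|B_X(u,\tau^{-k}/3)|\ge\max\{|B_X(w,\tau^{-k}/3)|:w\in B_X(u',6\tau^{-(k+1)})\}$. The directed graph $\mathcal D$ has vertex set $\{(u,k):u\in U_k,\ 0\le k\le K\}$, arcs $((u,k),(u',k+1))$ for $(u,u')\in A_k$, root $(u,0)$ with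 $U_0=\{u\}$, and the vertices $(x,K)$ are identified with $x\in X$. Arc weights: $\omega_{(u,k)(u',k+1)}:=10\tau^{-k}$. For two root-to-level-$K$ paths $\gamma_1\ne\gamma_2$, let $a$ be the first vertex at which they diverge, with arcs $av_1\in\gamma_1$, $av_2\in\gamma_2$, $v_1\ne v_2$; $\mathrm{dist}_{\hat{\mathcal D}}(\gamma_1,\gamma_2):=\max(\omega_{av_1},\omega_{av_2})$, and $\mathrm{dist}_{\hat{\mathcal D}}(\gamma,\gamma):=0$. *)

theory Defs
  imports Complex_Main
begin

definition fin_metric :: "'a set \<Rightarrow> ('a \<Rightarrow> 'a \<Rightarrow> real) \<Rightarrow> bool" where
  "fin_metric X d \<longleftrightarrow> finite X \<and>
     (\<forall>x\<in>X. \<forall>y\<in>X. d x y \<ge> 0 \<and> (d x y = 0 \<longleftrightarrow> x = y) \<and> d x y = d y x) \<and>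
     (\<forall>x\<in>X. \<forall>y\<in>X. \<forall>z\<in>X. d x z \<le> d x y + d y z)"

definition diam :: "'a set \<Rightarrow> ('a \<Rightarrow> 'a \<Rightarrow> real) \<Rightarrow> real" where
  "diam X d = Max {d x y | x y. x \<in> X \<and> y \<in> X}"

definition ballS :: "'a set \<Rightarrow> ('a \<Rightarrow> 'a \<Rightarrow> real) \<Rightarrow> 'a set \<Rightarrow> real \<Rightarrow> 'a set" where
  "ballS X d S r = {x \<in> X. \<exists>s\<in>S. d x s \<le> r}"

definition ballX :: "'a set \<Rightarrow> ('a \<Rightarrow> 'a \<Rightarrow> real) \<Rightarrow> 'a \<Rightarrow> real \<Rightarrow> 'a set" where
  "ballX X d x r = ballS X d {x} r"

definition eps0 :: "'a set \<Rightarrow> ('a \<Rightarrow> 'a \<Rightarrow> real) \<Rightarrow> real" where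
  "eps0 X d = Min {d x y | x y. x \<in> X \<and> y \<in> X \<and> x \<noteq> y}"

definition tau :: real where "tau = 12"

definition levelK :: "'a set \<Rightarrow> ('a \<Rightarrow> 'a \<Rightarrow> real) \<Rightarrow> nat" where
  "levelK X d = 1 + nat \<lceil>log tau (1 / eps0 X d)\<rceil>"

text \<open>N is an output of the greedy eta-net procedure (with some choice of the
  maximiser at each step): xs lists the chosen points x_1, x_2, ... in order.\<close>
definition greedy_net :: "'a set \<Rightarrow> ('a \<Rightarrow> 'a \<Rightarrow> real) \<Rightarrow> real \<Rightarrow> 'a set \<Rightarrow> bool" where
  "greedy_net X d eta N \<longleftrightarrow> (\<exists>xs. N = set xs \<and>
     (\<forall>j < length xs.
        xs ! j \<in> X - ballS X d (set (take j xs)) eta \<and>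
        (\<forall>y \<in> X - ballS X d (set (take j xs)) eta.
            card (ballX X d y (eta/3)) \<le> card (ballX X d (xs ! j) (eta/3)))) \<and>
     X - ballS X d (set xs) eta = {})"

definition arcA :: "'a set \<Rightarrow> ('a \<Rightarrow> 'a \<Rightarrow> real) \<Rightarrow> (nat \<Rightarrow> 'a set) \<Rightarrow> nat \<Rightarrow> 'a \<Rightarrow> 'a \<Rightarrow> bool" where
  "arcA X d U k u u' \<longleftrightarrow> u \<in> U k \<and> u' \<in> U (Suc k) \<and>
     d u u' \<le> 4 * tau powr (- real k) \<and>
     card (ballX X d u (tau powr (- real k) / 3)) \<ge>
       Max ((\<lambda>w. card (ballX X d w (tau powr (- real k) / 3))) `
              ballX X d u' (6 * tau powr (- real (Suc k))))"

text \<open>A directed path from the root (level 0) to level K, given as the list of the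
  first components of its vertices (u_0,0),(u_1,1),...,(u_K,K).\<close>
definition root_path :: "'a set \<Rightarrow> ('a \<Rightarrow> 'a \<Rightarrow> real) \<Rightarrow> (nat \<Rightarrow> 'a set) \<Rightarrow> 'a list \<Rightarrow> bool" where
  "root_path X d U \<gamma> \<longleftrightarrow> length \<gamma> = Suc (levelK X d) \<and>
     (\<forall>k \<le> levelK X d. \<gamma> ! k \<in> U k) \<and>
     (\<forall>k < levelK X d. arcA X d U k (\<gamma> ! k) (\<gamma> ! Suc k))"

definition arc_weight :: "nat \<Rightarrow> real" where
  "arc_weight k = 10 * tau powr (- real k)"

text \<open>dist between two root paths: if distinct, let a be the vertex at level k where they
  diverge (they agree up to level k and differ at level k+1); the two arcs a v1, a v2
  leave level k, and the distance is the max of their weights.\<close>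
definition distD :: "'a list \<Rightarrow> 'a list \<Rightarrow> real" where
  "distD \<gamma>1 \<gamma>2 = (if \<gamma>1 = \<gamma>2 then 0 else
     (let k = (LEAST k. \<gamma>1 ! Suc k \<noteq> \<gamma>2 ! Suc k) in max (arc_weight k) (arc_weight k)))"

end

theory Submission
  imports Defs
begin

text \<open>
  Consecutive vertices of a root path are at distance at most \<open>4\<tau>\<^sup>-\<^sup>j\<close>, so by the
  geometric series the level-\<open>k\<close> vertex of a path lies within \<open>4\<tau>/(\<tau>-1) \<cdot> \<tau>\<^sup>-\<^sup>k = 48/11 \<cdot> \<tau>\<^sup>-\<^sup>k\<close>
  of its endpoint. Two distinct root paths start at the same point (the \<open>1\<close>-net of a space of
  diameter \<open>1\<close> is a single point) and agree up to the level \<open>k\<close> at which they diverge; the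
  triangle inequality through their common level-\<open>k\<close> vertex gives
  \<open>d(x\<^sub>1,x\<^sub>2) \<le> 96/11 \<cdot> \<tau>\<^sup>-\<^sup>k \<le> 10 \<tau>\<^sup>-\<^sup>k\<close>, the weight of the diverging arcs.
\<close>

lemma tau_powr_minus: "tau powr (- real k) = (1 / tau) ^ k"
  by (simp add: tau_def powr_minus powr_realpow power_one_over inverse_eq_divide)

lemma geometric_sum_le:
  fixes q :: real
  assumes "0 \<le> q" "q < 1"
  shows "(\<Sum>j=k..<n. q ^ j) \<le> q ^ k / (1 - q)"
proof (cases "k < n")
  case True
  then have "{k..<n} = {k..n - 1}" by auto
  then have "(1 - q) * (\<Sum>j=k..<n. q ^ j) = q ^ k - q ^ n"
    using sum_gp_multiplied[of k "n - 1" q] True by simp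
  also have "\<dots> \<le> q ^ k" using assms by simp
  finally show ?thesis using assms by (simp add: pos_le_divide_eq mult.commute)
next
  case False
  then show ?thesis using assms by simp
qed

lemma fin_metric_self: "fin_metric X d \<Longrightarrow> x \<in> X \<Longrightarrow> d x x = 0"
  unfolding fin_metric_def by blast

lemma fin_metric_sym: "fin_metric X d \<Longrightarrow> x \<in> X \<Longrightarrow> y \<in> X \<Longrightarrow> d x y = d y x"
  unfolding fin_metric_def by blast

lemma fin_metric_triangle:
  "fin_metric X d \<Longrightarrow> x \<in> X \<Longrightarrow> y \<in> X \<Longrightarrow> z \<in> X \<Longrightarrow> d x z \<le> d x y + d y z"
  unfolding fin_metric_def by blast

lemma fin_metric_le_diam:
  assumes "fin_metric X d" "x \<in> X" "y \<in> X"
  shows "d x y \<le> diam X d"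
proof -
  have "{d x y | x y. x \<in> X \<and> y \<in> X} = (\<lambda>(x, y). d x y) ` (X \<times> X)" by auto
  then have "finite {d x y | x y. x \<in> X \<and> y \<in> X}"
    using assms(1) unfolding fin_metric_def by simp
  then show ?thesis unfolding diam_def using assms by (intro Max_ge) auto
qed

lemma fin_metric_dist_le_sum_steps:
  assumes "fin_metric X d" "\<And>j. k \<le> j \<Longrightarrow> j \<le> n \<Longrightarrow> p j \<in> X" "k \<le> n"
  shows "d (p k) (p n) \<le> (\<Sum>j=k..<n. d (p j) (p (Suc j)))"
  using assms(3)
proof (induction n rule: dec_induct)
  case base
  have "p k \<in> X" using assms(2,3) by simp
  then show ?case using fin_metric_self[OF assms(1)] by simp
next
  case (step n)
  have "d (p k) (p (Suc n)) \<le> d (p k) (p n) + d (p n) (p (Suc n))"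
    using fin_metric_triangle[OF assms(1)] assms(2) step.hyps by simp
  then show ?case using step.IH step.hyps by simp
qed

lemma greedy_net_subset: "greedy_net X d eta N \<Longrightarrow> N \<subseteq> X"
  unfolding greedy_net_def by (metis DiffD1 in_set_conv_nth subsetI)

lemma greedy_net_unique_if_diam_le:
  assumes met: "fin_metric X d" and diam: "diam X d \<le> eta"
    and net: "greedy_net X d eta N" and "a \<in> N" "b \<in> N"
  shows "a = b"
proof -
  obtain xs where N: "N = set xs"
    and fresh: "\<forall>j < length xs. xs ! j \<in> X - ballS X d (set (take j xs)) eta"
    using net unfolding greedy_net_def by blast
  have "length xs \<le> 1"
  proof (rule ccontr)
    assume "\<not> length xs \<le> 1"
    then have "take 1 xs = [xs ! 0]" "1 < length xs" "0 < length xs"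
      by (cases xs; simp)+
    then have "xs ! 1 \<in> X - ballS X d {xs ! 0} eta" "xs ! 0 \<in> X"
      using fresh by (metis list.set(1,2), blast)
    moreover have "d (xs ! 1) (xs ! 0) \<le> eta"
      using fin_metric_le_diam[OF met] diam calculation by (meson DiffD1 order_trans)
    ultimately show False unfolding ballS_def by auto
  qed
  then show ?thesis using \<open>a \<in> N\<close> \<open>b \<in> N\<close> N by (cases xs) auto
qed

lemma first_divergence:
  assumes "length xs = Suc K" "length ys = Suc K" "xs \<noteq> ys" "xs ! 0 = ys ! 0"
  defines "k \<equiv> LEAST k. xs ! Suc k \<noteq> ys ! Suc k"
  shows "k < K" "xs ! k = ys ! k"
proof -
  obtain i where "i < Suc K" "xs ! i \<noteq> ys ! i"
    using assms(1-3) nth_equalityI by metis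
  then obtain j where j: "j < K" "xs ! Suc j \<noteq> ys ! Suc j"
    using assms(4) by (cases i) auto
  then show "k < K" unfolding k_def by (meson Least_le le_less_trans)
  show "xs ! k = ys ! k"
  proof (cases k)
    case (Suc m)
    then show ?thesis using not_less_Least[of m "\<lambda>k. xs ! Suc k \<noteq> ys ! Suc k"] unfolding k_def by auto
  qed (use assms(4) in simp)
qed

lemma root_path_in_carrier:
  assumes nets: "\<forall>k \<le> levelK X d. greedy_net X d (tau powr (- real k)) (U k)"
    and "root_path X d U \<gamma>" "k \<le> levelK X d"
  shows "\<gamma> ! k \<in> X"
  using assms greedy_net_subset unfolding root_path_def by blast

lemma root_path_step_dist:
  assumes "root_path X d U \<gamma>" "k < levelK X d"
  shows "d (\<gamma> ! k) (\<gamma> ! Suc k) \<le> 4 * (1 / tau) ^ k"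
  using assms unfolding root_path_def arcA_def tau_powr_minus by blast

lemma root_path_dist_to_end:
  assumes met: "fin_metric X d"
    and nets: "\<forall>k \<le> levelK X d. greedy_net X d (tau powr (- real k)) (U k)"
    and path: "root_path X d U \<gamma>" and k: "k \<le> levelK X d"
  shows "d (\<gamma> ! k) (\<gamma> ! levelK X d) \<le> 48 / 11 * (1 / tau) ^ k"
proof -
  let ?K = "levelK X d"
  have "d (\<gamma> ! k) (\<gamma> ! ?K) \<le> (\<Sum>j=k..<?K. d (\<gamma> ! j) (\<gamma> ! Suc j))"
    using fin_metric_dist_le_sum_steps[OF met _ k] root_path_in_carrier[OF nets path] by blast
  also have "\<dots> \<le> (\<Sum>j=k..<?K. 4 * (1 / tau) ^ j)"
    using root_path_step_dist[OF path] by (intro sum_mono) simp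
  also have "\<dots> \<le> 4 * ((1 / tau) ^ k / (1 - 1 / tau))"
    unfolding sum_distrib_left[symmetric] by (intro mult_left_mono geometric_sum_le) (auto simp: tau_def)
  also have "\<dots> = 48 / 11 * (1 / tau) ^ k" by (simp add: tau_def)
  finally show ?thesis .
qed

lemma root_paths_same_root:
  assumes met: "fin_metric X d" and diam: "diam X d = 1"
    and nets: "\<forall>k \<le> levelK X d. greedy_net X d (tau powr (- real k)) (U k)"
    and "root_path X d U \<gamma>1" "root_path X d U \<gamma>2"
  shows "\<gamma>1 ! 0 = \<gamma>2 ! 0"
proof -
  have "greedy_net X d 1 (U 0)" using nets tau_powr_minus[of 0] by auto
  moreover have "\<gamma>1 ! 0 \<in> U 0" "\<gamma>2 ! 0 \<in> U 0" using assms(4,5) unfolding root_path_def by blast+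
  ultimately show ?thesis using greedy_net_unique_if_diam_le[OF met] diam by (metis order_refl)
qed

theorem lemma3p7:
  fixes X :: "'a set" and d :: "'a \<Rightarrow> 'a \<Rightarrow> real" and U :: "nat \<Rightarrow> 'a set"
    and \<gamma>1 \<gamma>2 :: "'a list" and x1 x2 :: 'a
  assumes "fin_metric X d"
    and "card X \<ge> 2"
    and "diam X d = 1"
    and "\<forall>k \<le> levelK X d. greedy_net X d (tau powr (- real k)) (U k)"
    and "root_path X d U \<gamma>1" and "root_path X d U \<gamma>2"
    and "\<gamma>1 ! levelK X d = x1" and "\<gamma>2 ! levelK X d = x2"
  shows "distD \<gamma>1 \<gamma>2 \<ge> d x1 x2"
proof (cases "\<gamma>1 = \<gamma>2")
  case True
  then show ?thesis
    using fin_metric_self[OF assms(1)] root_path_in_carrier[OF assms(4,5)] assms(7,8)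
    unfolding distD_def by auto
next
  case False
  let ?K = "levelK X d"
  define k where "k = (LEAST k. \<gamma>1 ! Suc k \<noteq> \<gamma>2 ! Suc k)"
  have "length \<gamma>1 = Suc ?K" "length \<gamma>2 = Suc ?K"
    using assms(5,6) unfolding root_path_def by auto
  with False root_paths_same_root[OF assms(1,3-6)]
  have k: "k < ?K" "\<gamma>1 ! k = \<gamma>2 ! k"
    using first_divergence unfolding k_def by blast+
  have "d (\<gamma>1 ! k) x1 \<le> 48 / 11 * (1 / tau) ^ k" "d (\<gamma>2 ! k) x2 \<le> 48 / 11 * (1 / tau) ^ k"
    using root_path_dist_to_end[OF assms(1,4)] assms(5-8) k(1) by auto
  moreover have "d x1 x2 \<le> d (\<gamma>1 ! k) x1 + d (\<gamma>2 ! k) x2"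
    using fin_metric_triangle[OF assms(1)] fin_metric_sym[OF assms(1)]
      root_path_in_carrier[OF assms(4)] assms(5-8) k by (metis less_imp_le order_refl)
  ultimately have "d x1 x2 \<le> 96 / 11 * (1 / tau) ^ k" by simp
  also have "\<dots> \<le> arc_weight k"
    unfolding arc_weight_def tau_powr_minus by (simp add: tau_def)
  finally show ?thesis using False unfolding distD_def k_def by simp
qed

end
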